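(* For all $\mu_0\in\mathcal{P}(\mathbb{Z})$, $I_{\mathrm{DV},\overline{\mathbb{Z}}}(\mu_0)=I_{\mathrm{DV},\mathbb{Z}}(\mu_0)$.
   Context: Let $p:\mathbb{Z}\to[0,1]$ with $0<p(k)<1$ for all $k$ and limits $p_\pm=\lim_{k\to\pm\infty}p(k)\in(0,1)$. $\overline{\mathbb{Z}}=\mathbb{Z}\cup\{\pm\infty\}$ is the two-point compactification. For a Markov kernel $\Pi$ on a space $\mathcal{X}$, the Donsker–Varadhan functional is $I_\Pi(\mu)=\sup_{u\in\mathcal{U}_1(\mathcal{X})}\int\log\frac{u(x)}{\Pi u(x)}\,d\mu(x)$, where $\mathcal{U}_1(\mathcal{X})$ is the set of bounded Borel functions $u\ge1$ on $\mathcal{X}$ and $\Pi u(x)=\int u(y)\Pi(x,dy)$. $I_{\mathrm{DV},\overline{\mathbb{Z}}}$ is $I_\Pi$ on $\mathcal{P}(\overline{\mathbb{Z}})$ for the kernel on $\overline{\mathbb{Z}}$ with $\pm\infty$ absorbing and $k\to k+1$ w.p. $p(k)$, $k\to k-1$ w.p. $1-p(k)$ for $k\in\mathbb{Z}$; $I_{\mathrm{DV},\mathbb{Z}}$ is $I_\Pi$ on $\mathcal{P}(\mathbb{Z})$ for the restriction of this kernel to $\mathbb{Z}$, i.e. $I_{\mathrm{DV},\mathbb{Z}}(\nu)=\sup_{u_k\ge1}\sum_k\nu(k)\log\frac{u_k}{p(k)u_{k+1}+(1-p(k))u_{k-1}}$. $\mathcal{P}(\mathbb{Z})$ is identified with the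 measures in $\mathcal{P}(\overline{\mathbb{Z}})$ giving no mass to $\pm\infty$. *)

theory Defs
  imports "HOL-Probability.Probability"
begin

text \<open>Two-point compactification of the integers: Fin k, and the points +oo, -oo.
  As a countable compact Hausdorff space its Borel sigma-algebra is discrete, so
  Borel probability measures on it are exactly probability mass functions.\<close>
datatype zbar = Fin int | PInf | MInf

instance zbar :: countable
  by countable_datatype

definition markov_op :: "('a \<Rightarrow> 'a pmf) \<Rightarrow> ('a \<Rightarrow> real) \<Rightarrow> 'a \<Rightarrow> real" where
  "markov_op K u x = measure_pmf.expectation (K x) u"

text \<open>U_1: bounded (Borel) functions u \<ge> 1 (every function is Borel on a discrete space).\<close>
definition U1 :: "('a \<Rightarrow> real) set" where
  "U1 = {u. bounded (range u) \<and> (\<forall>x. 1 \<le> u x)}"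

definition DV :: "('a \<Rightarrow> 'a pmf) \<Rightarrow> 'a pmf \<Rightarrow> ereal" where
  "DV K \<mu> = (SUP u \<in> U1. ereal (measure_pmf.expectation \<mu>
                   (\<lambda>x. ln (u x / markov_op K u x))))"

definition kernel_Z :: "(int \<Rightarrow> real) \<Rightarrow> int \<Rightarrow> int pmf" where
  "kernel_Z p k = map_pmf (\<lambda>b. if b then k + 1 else k - 1) (bernoulli_pmf (p k))"

fun kernel_Zbar :: "(int \<Rightarrow> real) \<Rightarrow> zbar \<Rightarrow> zbar pmf" where
  "kernel_Zbar p (Fin k) = map_pmf Fin (kernel_Z p k)"
| "kernel_Zbar p PInf = return_pmf PInf"
| "kernel_Zbar p MInf = return_pmf MInf"

definition I_DV_Zbar :: "(int \<Rightarrow> real) \<Rightarrow> zbar pmf \<Rightarrow> ereal" where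
  "I_DV_Zbar p = DV (kernel_Zbar p)"

definition I_DV_Z :: "(int \<Rightarrow> real) \<Rightarrow> int pmf \<Rightarrow> ereal" where
  "I_DV_Z p = DV (kernel_Z p)"

end

theory Submission
  imports Defs
begin

text \<open>Since \<open>map_pmf Fin \<mu>0\<close> gives no mass to the points at infinity and the kernel on \<open>Fin\<close>-points
  is the image of the kernel on the integers, each test function \<open>u\<close> on the compactification
  contributes exactly what its restriction \<open>u \<circ> Fin\<close> contributes on the integers; conversely
  every test function on the integers is such a restriction (extend it by 1). So both suprema
  range over the same set of values.\<close>

lemma markov_op_comp_embedding:
  assumes "\<And>x. K (f x) = map_pmf f (K' x)"
  shows "markov_op K u (f x) = markov_op K' (u \<circ> f) x"
  by (simp add: markov_op_def assms integral_map_pmf o_def)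

lemma U1_comp: "u \<in> U1 \<Longrightarrow> u \<circ> f \<in> U1"
  unfolding U1_def by (auto intro: bounded_subset[of "range u"])

lemma U1_comp_image:
  assumes "inj f"
  shows "(\<lambda>u. u \<circ> f) ` U1 = U1"
proof
  show "(\<lambda>u. u \<circ> f) ` U1 \<subseteq> U1" using U1_comp by blast
next
  show "U1 \<subseteq> (\<lambda>u. u \<circ> f) ` U1"
  proof
    fix v :: "'a \<Rightarrow> real" assume v: "v \<in> U1"
    define u where "u y = (if y \<in> range f then v (inv f y) else 1)" for y
    have "range u \<subseteq> insert 1 (range v)" by (auto simp: u_def)
    moreover have "bounded (insert 1 (range v))" using v by (simp add: U1_def)
    ultimately have "bounded (range u)" by (rule bounded_subset[rotated])
    moreover have "\<forall>y. 1 \<le> u y" using v by (simp add: U1_def u_def)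
    ultimately have "u \<in> U1" by (simp add: U1_def)
    moreover have "u \<circ> f = v" using assms by (auto simp: u_def)
    ultimately show "v \<in> (\<lambda>u. u \<circ> f) ` U1" by blast
  qed
qed

lemma DV_map_pmf_embedding:
  assumes "inj f" and "\<And>x. K (f x) = map_pmf f (K' x)"
  shows "DV K (map_pmf f \<mu>) = DV K' \<mu>"
proof -
  let ?J = "\<lambda>v. ereal (measure_pmf.expectation \<mu> (\<lambda>x. ln (v x / markov_op K' v x)))"
  have "DV K (map_pmf f \<mu>) = (SUP u \<in> U1. ?J (u \<circ> f))"
    by (simp add: DV_def integral_map_pmf markov_op_comp_embedding[where K = K and K' = K', OF assms(2)])
  also have "\<dots> = (SUP v \<in> (\<lambda>u. u \<circ> f) ` U1. ?J v)"
    by (simp add: image_image)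
  also have "\<dots> = DV K' \<mu>"
    by (simp add: U1_comp_image[OF assms(1)] DV_def)
  finally show ?thesis .
qed

theorem lemma3p1:
  fixes p :: "int \<Rightarrow> real" and p_plus p_minus :: real and \<mu>0 :: "int pmf"
  assumes "\<And>k. 0 < p k" and "\<And>k. p k < 1"
    and "(p \<longlongrightarrow> p_plus) at_top" and "(p \<longlongrightarrow> p_minus) at_bot"
    and "0 < p_plus" and "p_plus < 1" and "0 < p_minus" and "p_minus < 1"
  shows "I_DV_Zbar p (map_pmf Fin \<mu>0) = I_DV_Z p \<mu>0"
  unfolding I_DV_Zbar_def I_DV_Z_def
  by (rule DV_map_pmf_embedding) (auto intro: injI)

end
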